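(* Let $A\in\mathcal M(m;\mathbb C)$ and let $\mathcal G_A$ be the set of limit points of the sequence $(A^n)_{n\in\mathbb N}$ (i.e. limits of convergent subsequences). If $\mathcal G_A$ is nonempty, then $\mathcal G_A$ is an abelian compact group under matrix multiplication. *)

theory Defs
  imports "HOL-Analysis.Analysis" "HOL-Algebra.Group"
begin

primrec matpow :: "'a::semiring_1^'n^'n \<Rightarrow> nat \<Rightarrow> 'a^'n^'n" where
  "matpow A 0 = mat 1"
| "matpow A (Suc k) = matpow A k ** A"

definition limit_points_pow :: "complex^'n^'n \<Rightarrow> (complex^'n^'n) set" where
  "limit_points_pow A = {L. \<exists>r. strict_mono r \<and> (\<lambda>k. matpow A (r k)) \<longlonglongrightarrow> L}"

end

theory Submission
  imports Defs "Jordan_Normal_Form.Jordan_Normal_Form_Existence"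
begin

text \<open>If some subsequence of the powers of \<open>A\<close> is bounded, the Jordan normal form shows that every
  eigenvalue has modulus at most 1 and that those of modulus 1 only have blocks of size 1; hence all
  powers are bounded and the set of limit points is compact. Limit points multiply by adding the
  exponents of their subsequences, so they form a commutative semigroup. Given limit points
  \<open>L = lim A^(r k)\<close> and \<open>M = lim A^(s k)\<close>, every limit point \<open>N\<close> of a subsequence of the bounded
  sequence \<open>A^(s (r k + k) - r k)\<close> satisfies \<open>L N = M\<close>; a commutative semigroup in which all
  such equations are solvable is a group.\<close>

lemma norm_bound_diag_block_mat_block:
  assumes "norm_bound (diag_block_mat As) c" and "B \<in> set As"
  shows "norm_bound B c"
  using assms
proof (induction As)
  case (Cons A As)
  let ?D = "diag_block_mat As"
  have "norm_bound A c \<and> norm_bound ?D c"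
  proof (intro conjI norm_boundI)
    fix i j assume "i < dim_row A" "j < dim_col A"
    then show "norm (A $$ (i, j)) \<le> c"
      using Cons.prems(1)[unfolded norm_bound_def, rule_format, of i j] by (simp add: Let_def)
  next
    fix i j assume "i < dim_row ?D" "j < dim_col ?D"
    then show "norm (?D $$ (i, j)) \<le> c"
      using Cons.prems(1)[unfolded norm_bound_def, rule_format, of "i + dim_row A" "j + dim_col A"]
      by (simp add: Let_def)
  qed
  then show ?case using Cons.IH Cons.prems(2) by auto
qed simp

lemma similar_mat_wit_pow_norm_bound:
  assumes sim: "similar_mat_wit A B P Q" and A: "A \<in> carrier_mat n n"
  obtains d where "\<And>k C. norm_bound (A ^\<^sub>m k) C \<Longrightarrow> norm_bound (B ^\<^sub>m k) (d * C)"
proof -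
  from sim A have P: "P \<in> carrier_mat n n" and Q: "Q \<in> carrier_mat n n"
    unfolding similar_mat_wit_def Let_def carrier_mat_def by force+
  obtain bP where bP: "norm_bound P bP" using norm_bound_max by blast
  obtain bQ where bQ: "norm_bound Q bQ" using norm_bound_max by blast
  have "norm_bound (B ^\<^sub>m k) (bQ * of_nat n * bP * of_nat n * C)"
    if "norm_bound (A ^\<^sub>m k) C" for k C
  proof -
    have Ak: "A ^\<^sub>m k \<in> carrier_mat n n" using A by simp
    have "norm_bound (Q * A ^\<^sub>m k * P) (bQ * C * of_nat n * bP * of_nat n)"
      using norm_bound_mult[OF mult_carrier_mat[OF Q Ak] P norm_bound_mult[OF Q Ak bQ that] bP] .
    then show ?thesis
      unfolding similar_mat_wit_pow_id[OF similar_mat_wit_sym[OF sim]] by (simp only: mult_ac)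
  qed
  then show ?thesis by (rule that)
qed

lemma jordan_block_pow_subseq_bound_norm_le_1:
  fixes a :: "'a::real_normed_field" and r :: "nat \<Rightarrow> nat"
  assumes r: "strict_mono r" and m: "0 < m" and bound: "\<And>k. norm_bound (jordan_block m a ^\<^sub>m r k) C"
  shows "norm a \<le> 1"
proof (rule ccontr)
  assume "\<not> norm a \<le> 1"
  then have a: "norm a > 1" by simp
  obtain k where k: "C < norm a ^ k" using real_arch_pow[OF a] by blast
  have "norm a ^ k \<le> norm a ^ r k" using a seq_suble[OF r] by (intro power_increasing) auto
  also have "norm a ^ r k = norm ((jordan_block m a ^\<^sub>m r k) $$ (0,0))"
    using m by (simp add: jordan_block_pow norm_power)
  also have "\<dots> \<le> C" using bound m unfolding norm_bound_def by simp
  finally show False using k by simp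
qed

lemma jordan_block_pow_subseq_bound_size_le_1:
  fixes a :: "'a::real_normed_field" and r :: "nat \<Rightarrow> nat"
  assumes r: "strict_mono r" and a: "norm a = 1" and bound: "\<And>k. norm_bound (jordan_block m a ^\<^sub>m r k) C"
  shows "m \<le> 1"
proof (rule ccontr)
  assume "\<not> m \<le> 1"
  then have m: "1 < m" by simp
  obtain k where k: "C < real k" using reals_Archimedean2 by blast
  have "real k \<le> real (r k)" using seq_suble[OF r] by simp
  also have "real (r k) = norm ((jordan_block m a ^\<^sub>m r k) $$ (0,1))"
    using m a by (simp add: jordan_block_pow norm_mult norm_power)
  also have "\<dots> \<le> C" using bound m unfolding norm_bound_def by simp
  finally show False using k by simp
qed

lemma jordan_nf_pow_bounded_if_subseq_bounded:
  fixes A :: "'a::real_normed_field mat" and r :: "nat \<Rightarrow> nat"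
  assumes A: "A \<in> carrier_mat n n" and jnf: "jordan_nf A n_as"
    and r: "strict_mono r" and bound: "\<And>k. norm_bound (A ^\<^sub>m r k) C"
  shows "\<exists>c. \<forall>k. norm_bound (A ^\<^sub>m k) c"
proof -
  from jnf obtain P Q where sim: "similar_mat_wit A (jordan_matrix n_as) P Q"
    unfolding jordan_nf_def similar_mat_def by blast
  obtain d where d: "\<And>k C. norm_bound (A ^\<^sub>m k) C \<Longrightarrow> norm_bound (jordan_matrix n_as ^\<^sub>m k) (d * C)"
    using similar_mat_wit_pow_norm_bound[OF sim A] by blast
  have block: "norm_bound (jordan_block m a ^\<^sub>m r k) (d * C)" if "(m, a) \<in> set n_as" for m a k
    using norm_bound_diag_block_mat_block[OF d[OF bound, unfolded jordan_matrix_pow]] that by force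
  have "\<exists>c1 c2. \<forall>k. norm_bound (A ^\<^sub>m k) (c1 + c2 * of_nat k ^ (1 - 1))"
  proof (rule jordan_nf_matrix_poly_bound[OF A _ _ jnf])
    show "norm a \<le> 1" if "(m, a) \<in> set n_as" "0 < m" for m a
      using jordan_block_pow_subseq_bound_norm_le_1[OF r that(2) block[OF that(1)]] .
    show "m \<le> 1" if "(m, a) \<in> set n_as" "norm a = 1" for m a
      using jordan_block_pow_subseq_bound_size_le_1[OF r that(2) block[OF that(1)]] .
  qed
  then show ?thesis by auto
qed

text \<open>Matrices indexed by a finite type are transported to the matrices of the Jordan normal form
  library along a fixed enumeration of the index type.\<close>

definition cart_index :: "nat \<Rightarrow> 'n::finite" where
  "cart_index = (SOME h. bij_betw h {0..<CARD('n)} UNIV)"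

definition mat_of_cart :: "'a^'n^'n \<Rightarrow> 'a mat" where
  "mat_of_cart X =
    Matrix.mat CARD('n) CARD('n) (\<lambda>(i, j). vec_nth (vec_nth X (cart_index i)) (cart_index j))"

lemma bij_betw_cart_index: "bij_betw (cart_index :: nat \<Rightarrow> 'n::finite) {0..<CARD('n)} UNIV"
proof -
  obtain h :: "nat \<Rightarrow> 'n" where "bij_betw h {0..<CARD('n)} UNIV"
    using ex_bij_betw_nat_finite[of "UNIV :: 'n set"] by auto
  then show ?thesis
    unfolding cart_index_def by (rule someI[where P = "\<lambda>h. bij_betw h {0..<CARD('n)} UNIV"])
qed

lemma cart_index_surj: obtains i where "i < CARD('n)" and "cart_index i = (a :: 'n::finite)"
  using bij_betw_cart_index[where 'n = 'n] unfolding bij_betw_def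
  by (metis atLeastLessThan_iff imageE UNIV_I)

lemma mat_of_cart_carrier [simp]:
  "mat_of_cart (X :: 'a^'n::finite^'n) \<in> carrier_mat CARD('n) CARD('n)"
  "dim_row (mat_of_cart X) = CARD('n)" "dim_col (mat_of_cart X) = CARD('n)"
  by (auto simp: mat_of_cart_def)

lemma mat_of_cart_index [simp]:
  "i < CARD('n) \<Longrightarrow> j < CARD('n) \<Longrightarrow>
    mat_of_cart (X :: 'a^'n::finite^'n) $$ (i, j) = vec_nth (vec_nth X (cart_index i)) (cart_index j)"
  by (simp add: mat_of_cart_def)

lemma mat_of_cart_mult:
  "mat_of_cart ((X :: 'a::semiring_1^'n::finite^'n) ** Y) = mat_of_cart X * mat_of_cart Y"
proof (rule eq_matI)
  fix i j assume "i < dim_row (mat_of_cart X * mat_of_cart Y)" "j < dim_col (mat_of_cart X * mat_of_cart Y)"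
  then have i: "i < CARD('n)" and j: "j < CARD('n)" by auto
  have "(mat_of_cart X * mat_of_cart Y) $$ (i, j) = (\<Sum>k = 0..<CARD('n).
      vec_nth (vec_nth X (cart_index i)) (cart_index k) * vec_nth (vec_nth Y (cart_index k)) (cart_index j))"
    using i j by (simp add: scalar_prod_def)
  also have "\<dots> = (\<Sum>k\<in>UNIV. vec_nth (vec_nth X (cart_index i)) k * vec_nth (vec_nth Y k) (cart_index j))"
    by (rule sum.reindex_bij_betw[OF bij_betw_cart_index])
  also have "\<dots> = mat_of_cart (X ** Y) $$ (i, j)"
    using i j by (simp add: matrix_matrix_mult_def)
  finally show "mat_of_cart (X ** Y) $$ (i, j) = (mat_of_cart X * mat_of_cart Y) $$ (i, j)" by simp
qed auto

lemma mat_of_cart_one: "mat_of_cart (Finite_Cartesian_Product.mat 1 :: 'a::semiring_1^'n::finite^'n) = 1\<^sub>m CARD('n)"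
proof (rule eq_matI)
  fix i j assume "i < dim_row (1\<^sub>m CARD('n))" "j < dim_col (1\<^sub>m CARD('n))"
  then have i: "i < CARD('n)" and j: "j < CARD('n)" by auto
  then have "(cart_index i :: 'n) = cart_index j \<longleftrightarrow> i = j"
    using bij_betw_cart_index[where 'n = 'n] unfolding bij_betw_def inj_on_def by auto
  then show "mat_of_cart (Finite_Cartesian_Product.mat 1 :: 'a^'n^'n) $$ (i, j) = 1\<^sub>m CARD('n) $$ (i, j)"
    using i j by (simp add: Finite_Cartesian_Product.mat_def)
qed auto

lemma mat_of_cart_matpow: "mat_of_cart (matpow (A :: 'a::semiring_1^'n::finite^'n) k) = mat_of_cart A ^\<^sub>m k"
  by (induction k) (simp_all add: mat_of_cart_one mat_of_cart_mult)

lemma norm_le_sum_norm_nth: "norm (x :: 'a::real_normed_vector^'n) \<le> (\<Sum>i\<in>UNIV. norm (vec_nth x i))"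
  by (simp add: norm_vec_def L2_set_le_sum)

lemma bounded_iff_norm_bound_mat_of_cart:
  fixes F :: "'b \<Rightarrow> 'a::real_normed_field^'n::finite^'n"
  shows "bounded (range F) \<longleftrightarrow> (\<exists>c. \<forall>k. norm_bound (mat_of_cart (F k)) c)"
proof
  assume "bounded (range F)"
  then obtain c where c: "\<And>k. norm (F k) \<le> c" by (auto simp: bounded_iff)
  have "norm (vec_nth (vec_nth (F k) a) b) \<le> c" for k a b
    using Finite_Cartesian_Product.norm_nth_le[of "vec_nth (F k) a" b]
      Finite_Cartesian_Product.norm_nth_le[of "F k" a] c[of k]
    by linarith
  then show "\<exists>c. \<forall>k. norm_bound (mat_of_cart (F k)) c" by (auto simp: norm_bound_def)
next
  assume "\<exists>c. \<forall>k. norm_bound (mat_of_cart (F k)) c"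
  then obtain c where c: "\<And>k. norm_bound (mat_of_cart (F k)) c" by blast
  have entry: "norm (vec_nth (vec_nth (F k) a) b) \<le> c" for k a b
  proof -
    obtain i j where "i < CARD('n)" "cart_index i = a" "j < CARD('n)" "cart_index j = b"
      by (metis cart_index_surj)
    then show ?thesis
      using c[of k] unfolding norm_bound_def by (metis mat_of_cart_carrier(2,3) mat_of_cart_index)
  qed
  have "norm (F k) \<le> of_nat CARD('n) * (of_nat CARD('n) * c)" for k
  proof -
    have "norm (F k) \<le> (\<Sum>a\<in>UNIV. \<Sum>b\<in>UNIV. norm (vec_nth (vec_nth (F k) a) b))"
      by (intro order.trans[OF norm_le_sum_norm_nth] sum_mono norm_le_sum_norm_nth)
    also have "\<dots> \<le> (\<Sum>a\<in>(UNIV :: 'n set). \<Sum>b\<in>(UNIV :: 'n set). c)"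
      by (intro sum_mono entry)
    finally show ?thesis by simp
  qed
  then show "bounded (range F)" by (auto simp: bounded_iff)
qed

lemma matpow_bounded_if_subseq_bounded:
  fixes A :: "complex^'n::finite^'n" and r :: "nat \<Rightarrow> nat"
  assumes r: "strict_mono r" and bounded: "bounded (range (\<lambda>k. matpow A (r k)))"
  shows "bounded (range (matpow A))"
proof -
  let ?M = "mat_of_cart A"
  obtain C where C: "\<And>k. norm_bound (?M ^\<^sub>m r k) C"
    using bounded unfolding bounded_iff_norm_bound_mat_of_cart mat_of_cart_matpow by blast
  obtain as where "char_poly ?M = (\<Prod>a\<leftarrow>as. [:- a, 1:])"
    using char_poly_factorized[OF mat_of_cart_carrier(1)] by blast
  then obtain n_as where "jordan_nf ?M n_as"
    using jordan_nf_exists[OF mat_of_cart_carrier(1)] by blast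
  from jordan_nf_pow_bounded_if_subseq_bounded[OF mat_of_cart_carrier(1) this r C]
  show ?thesis unfolding bounded_iff_norm_bound_mat_of_cart mat_of_cart_matpow .
qed

definition subseq_limits :: "(nat \<Rightarrow> 'a::topological_space) \<Rightarrow> 'a set" where
  "subseq_limits X = {L. \<exists>r. strict_mono r \<and> (X \<circ> r) \<longlonglongrightarrow> L}"

lemma limit_points_pow_eq_subseq_limits: "limit_points_pow A = subseq_limits (matpow A)"
  by (simp add: limit_points_pow_def subseq_limits_def o_def)

lemma filterlim_at_top_strict_mono_subseq:
  fixes f :: "nat \<Rightarrow> nat"
  assumes "filterlim f at_top sequentially"
  obtains \<sigma> :: "nat \<Rightarrow> nat" where "strict_mono \<sigma>" and "strict_mono (f \<circ> \<sigma>)"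
proof -
  have "\<exists>j. i < j \<and> f i < f j" for i
  proof -
    from assms obtain N where "\<And>j. N \<le> j \<Longrightarrow> Suc (f i) \<le> f j"
      unfolding filterlim_at_top eventually_sequentially by blast
    from this[of "max N (Suc i)"] show ?thesis by (intro exI[of _ "max N (Suc i)"]) auto
  qed
  then obtain \<sigma> where \<sigma>: "\<And>n. \<sigma> n < \<sigma> (Suc n) \<and> f (\<sigma> n) < f (\<sigma> (Suc n))"
    using dependent_nat_choice[of "\<lambda>_ _. True" "\<lambda>_ i j. i < j \<and> f i < f j"] by blast
  have "strict_mono \<sigma>" "strict_mono (f \<circ> \<sigma>)"
    unfolding strict_mono_Suc_iff using \<sigma> by auto
  then show ?thesis by (rule that)
qed

lemma filterlim_at_top_if_ge:
  assumes "\<And>n. n \<le> g n"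
  shows "filterlim (g :: nat \<Rightarrow> nat) at_top sequentially"
  using assms unfolding filterlim_at_top eventually_sequentially by (meson le_trans)

lemma subseq_limitsI:
  fixes f :: "nat \<Rightarrow> nat" and X :: "nat \<Rightarrow> 'a::topological_space"
  assumes f: "filterlim f at_top sequentially" and lim: "(\<lambda>k. X (f k)) \<longlonglongrightarrow> L"
  shows "L \<in> subseq_limits X"
proof -
  obtain \<sigma> :: "nat \<Rightarrow> nat" where "strict_mono \<sigma>" "strict_mono (f \<circ> \<sigma>)"
    using filterlim_at_top_strict_mono_subseq[OF f] .
  moreover have "(X \<circ> (f \<circ> \<sigma>)) \<longlonglongrightarrow> L"
    using LIMSEQ_subseq_LIMSEQ[OF lim \<open>strict_mono \<sigma>\<close>] by (simp add: o_def)
  ultimately show ?thesis unfolding subseq_limits_def by blast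
qed

lemma subseq_limits_eq_INT_closure:
  fixes X :: "nat \<Rightarrow> 'a::metric_space"
  shows "subseq_limits X = (\<Inter>N. closure (X ` {N..}))"
proof (intro equalityI subsetI INT_I)
  fix L N assume "L \<in> subseq_limits X"
  then obtain r where r: "strict_mono r" "(X \<circ> r) \<longlonglongrightarrow> L" unfolding subseq_limits_def by blast
  have "\<forall>k. X (r (k + N)) \<in> X ` {N..}"
    using seq_suble[OF r(1)] by (metis atLeast_iff image_eqI le_add2 le_trans)
  moreover have "(\<lambda>k. X (r (k + N))) \<longlonglongrightarrow> L"
    using LIMSEQ_ignore_initial_segment[OF r(2)] by (simp add: o_def)
  ultimately show "L \<in> closure (X ` {N..})"
    unfolding closure_sequential by (intro exI[of _ "\<lambda>k. X (r (k + N))"]) simp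
next
  fix L assume L: "L \<in> (\<Inter>N. closure (X ` {N..}))"
  have "\<exists>m. n \<le> m \<and> dist (X m) L < inverse (Suc n)" for n
  proof -
    from L have "L \<in> closure (X ` {n..})" by blast
    then obtain y where "y \<in> X ` {n..}" "dist y L < inverse (Suc n)"
      unfolding closure_approachable by (meson inverse_positive_iff_positive of_nat_0_less_iff zero_less_Suc)
    then show ?thesis by auto
  qed
  then obtain g where g: "\<And>n. n \<le> g n" "\<And>n. dist (X (g n)) L < inverse (Suc n)" by metis
  have "eventually (\<lambda>n. dist (X (g n)) L \<le> inverse (Suc n)) sequentially"
    by (intro always_eventually allI less_imp_le[OF g(2)])
  then have "(\<lambda>n. dist (X (g n)) L) \<longlonglongrightarrow> 0"
    by (intro tendsto_sandwich[OF _ _ tendsto_const LIMSEQ_inverse_real_of_nat]) simp_all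
  then have "(\<lambda>n. X (g n)) \<longlonglongrightarrow> L" by (rule tendsto_dist_iff[THEN iffD2])
  then show "L \<in> subseq_limits X" by (rule subseq_limitsI[OF filterlim_at_top_if_ge[OF g(1)]])
qed

lemma closed_subseq_limits: "closed (subseq_limits (X :: nat \<Rightarrow> 'a::metric_space))"
  by (simp add: subseq_limits_eq_INT_closure closed_INT)

lemma compact_subseq_limits:
  fixes X :: "nat \<Rightarrow> 'a::heine_borel"
  assumes "bounded (range X)"
  shows "compact (subseq_limits X)"
proof -
  have "subseq_limits X \<subseteq> closure (range X)"
    unfolding subseq_limits_eq_INT_closure by (metis INT_lower atLeast_0 UNIV_I)
  then have "bounded (subseq_limits X)" using assms by (meson bounded_closure bounded_subset)
  then show ?thesis by (simp add: compact_eq_bounded_closed closed_subseq_limits)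
qed

lemma bounded_subseq_limit_along:
  fixes X :: "nat \<Rightarrow> 'a::heine_borel"
  assumes "bounded (range X)" and f: "filterlim f at_top sequentially"
  obtains \<sigma> L where "strict_mono \<sigma>" "(\<lambda>k. X (f (\<sigma> k))) \<longlonglongrightarrow> L" "L \<in> subseq_limits X"
proof -
  have "bounded (range (X \<circ> f))" using assms(1) by (rule bounded_subset) auto
  then obtain L \<sigma> where \<sigma>: "strict_mono \<sigma>" "((X \<circ> f) \<circ> \<sigma>) \<longlonglongrightarrow> L"
    using bounded_imp_convergent_subsequence by blast
  have "filterlim (f \<circ> \<sigma>) at_top sequentially"
    using filterlim_compose[OF f filterlim_subseq[OF \<sigma>(1)]] by (simp add: o_def)
  with \<sigma> have "L \<in> subseq_limits X" by (intro subseq_limitsI[of "f \<circ> \<sigma>"]) (auto simp: o_def)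
  with \<sigma> that show ?thesis by (auto simp: o_def)
qed

lemma matpow_add: "matpow A (m + n) = matpow A m ** matpow A n"
  by (induction n) (simp_all add: matrix_mul_assoc)

lemma matpow_commute: "matpow A m ** matpow A n = matpow A n ** matpow A m"
  by (metis matpow_add add.commute)

lemma tendsto_matrix_mult:
  fixes f :: "'b \<Rightarrow> 'a::real_normed_field^'n^'m" and g :: "'b \<Rightarrow> 'a^'k^'n"
  assumes "(f \<longlongrightarrow> L) F" and "(g \<longlongrightarrow> M) F"
  shows "((\<lambda>x. f x ** g x) \<longlongrightarrow> L ** M) F"
  unfolding matrix_matrix_mult_def using assms by (intro tendsto_intros)

lemma subseq_limits_matpow_mult:
  fixes A :: "'a::real_normed_field^'n^'n"
  assumes "L \<in> subseq_limits (matpow A)" and "M \<in> subseq_limits (matpow A)"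
  shows "L ** M \<in> subseq_limits (matpow A)"
proof -
  from assms obtain r s where r: "strict_mono r" "(\<lambda>k. matpow A (r k)) \<longlonglongrightarrow> L"
    and s: "strict_mono s" "(\<lambda>k. matpow A (s k)) \<longlonglongrightarrow> M"
    unfolding subseq_limits_def o_def by blast
  have "(\<lambda>k. matpow A (r k + s k)) \<longlonglongrightarrow> L ** M"
    unfolding matpow_add by (rule tendsto_matrix_mult[OF r(2) s(2)])
  moreover have "filterlim (\<lambda>k. r k + s k) at_top sequentially"
    using seq_suble[OF r(1)] by (intro filterlim_at_top_if_ge) (simp add: trans_le_add1)
  ultimately show ?thesis by (intro subseq_limitsI)
qed

lemma subseq_limits_matpow_commute:
  fixes A :: "'a::real_normed_field^'n^'n"
  assumes "L \<in> subseq_limits (matpow A)" and "M \<in> subseq_limits (matpow A)"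
  shows "L ** M = M ** L"
proof -
  from assms obtain r s where r: "(\<lambda>k. matpow A (r k)) \<longlonglongrightarrow> L" and s: "(\<lambda>k. matpow A (s k)) \<longlonglongrightarrow> M"
    unfolding subseq_limits_def o_def by blast
  have "(\<lambda>k. matpow A (r k) ** matpow A (s k)) \<longlonglongrightarrow> L ** M"
    by (rule tendsto_matrix_mult[OF r s])
  moreover have "(\<lambda>k. matpow A (r k) ** matpow A (s k)) \<longlonglongrightarrow> M ** L"
    unfolding matpow_commute[of A "r _"] by (rule tendsto_matrix_mult[OF s r])
  ultimately show ?thesis by (rule LIMSEQ_unique)
qed

lemma subseq_limits_matpow_solvable:
  fixes A :: "'a::{real_normed_field, heine_borel}^'n^'n"
  assumes bounded: "bounded (range (matpow A))"
    and "L \<in> subseq_limits (matpow A)" and "M \<in> subseq_limits (matpow A)"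
  shows "\<exists>N \<in> subseq_limits (matpow A). L ** N = M"
proof -
  from assms(2,3) obtain r s where r: "strict_mono r" "(\<lambda>k. matpow A (r k)) \<longlonglongrightarrow> L"
    and s: "strict_mono s" "(\<lambda>k. matpow A (s k)) \<longlonglongrightarrow> M"
    unfolding subseq_limits_def o_def by blast
  define t where "t j = s (r j + j)" for j
  have t_ge: "r j + j \<le> t j" for j
    unfolding t_def by (rule seq_suble[OF s(1)])
  have "filterlim (\<lambda>j. t j - r j) at_top sequentially"
    using t_ge by (intro filterlim_at_top_if_ge) (metis diff_le_mono add_diff_cancel_left')
  then obtain \<sigma> N where \<sigma>: "strict_mono \<sigma>" "(\<lambda>k. matpow A (t (\<sigma> k) - r (\<sigma> k))) \<longlonglongrightarrow> N"
    and N: "N \<in> subseq_limits (matpow A)"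
    by (rule bounded_subseq_limit_along[OF bounded])
  have split: "matpow A (r j) ** matpow A (t j - r j) = matpow A (t j)" for j
    using t_ge[of j] by (simp flip: matpow_add)
  have "(\<lambda>k. matpow A (r (\<sigma> k)) ** matpow A (t (\<sigma> k) - r (\<sigma> k))) \<longlonglongrightarrow> L ** N"
    using tendsto_matrix_mult[OF LIMSEQ_subseq_LIMSEQ[OF r(2) \<sigma>(1)] \<sigma>(2)] by (simp add: o_def)
  moreover have "(\<lambda>k. matpow A (r (\<sigma> k)) ** matpow A (t (\<sigma> k) - r (\<sigma> k))) \<longlonglongrightarrow> M"
  proof -
    have "filterlim (\<lambda>k. r (\<sigma> k) + \<sigma> k) at_top sequentially"
      using seq_suble[OF \<sigma>(1)] by (intro filterlim_at_top_if_ge) (simp add: trans_le_add2)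
    then show ?thesis unfolding split unfolding t_def by (rule filterlim_compose[OF s(2)])
  qed
  ultimately have "L ** N = M" by (rule LIMSEQ_unique)
  with N show ?thesis by blast
qed

lemma comm_group_if_solvable:
  assumes nonempty: "G \<noteq> {}"
    and closed: "\<And>x y. x \<in> G \<Longrightarrow> y \<in> G \<Longrightarrow> f x y \<in> G"
    and assoc: "\<And>x y z. x \<in> G \<Longrightarrow> y \<in> G \<Longrightarrow> z \<in> G \<Longrightarrow> f (f x y) z = f x (f y z)"
    and comm: "\<And>x y. x \<in> G \<Longrightarrow> y \<in> G \<Longrightarrow> f x y = f y x"
    and solvable: "\<And>x y. x \<in> G \<Longrightarrow> y \<in> G \<Longrightarrow> \<exists>z \<in> G. f x z = y"
  shows "\<exists>e. comm_group \<lparr>carrier = G, mult = f, one = e\<rparr>"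
proof -
  from nonempty obtain a where a: "a \<in> G" by blast
  from solvable[OF a a] obtain e where e: "e \<in> G" "f a e = a" by blast
  have e_left: "f e y = y" if y: "y \<in> G" for y
  proof -
    from solvable[OF a y] obtain z where z: "z \<in> G" "f a z = y" by blast
    have "f e y = f (f e a) z" using z e a by (simp add: assoc)
    also have "\<dots> = f (f a e) z" using comm[OF e(1) a] by simp
    also have "\<dots> = y" using e z by simp
    finally show ?thesis .
  qed
  have "comm_group \<lparr>carrier = G, mult = f, one = e\<rparr>"
  proof (rule comm_groupI, goal_cases)
    case (1 x y) then show ?case by (simp add: closed)
  next
    case 2 show ?case by (simp add: e)
  next
    case (3 x y z) then show ?case by (simp add: assoc)
  next
    case (4 x y) then show ?case by (auto intro: comm)
  next
    case (5 x) then show ?case by (simp add: e_left)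
  next
    case (6 x)
    then have x: "x \<in> G" by simp
    obtain y where y: "y \<in> G" "f x y = e" using solvable[OF x e(1)] by blast
    with comm[OF x y(1)] show ?case by auto
  qed
  then show ?thesis by blast
qed

theorem mainTheorem13:
  fixes A :: "complex^'m^'m"
  assumes "limit_points_pow A \<noteq> {}"
  shows "compact (limit_points_pow A) \<and>
         (\<exists>E. comm_group \<lparr>carrier = limit_points_pow A, mult = (\<lambda>X Y. X ** Y), one = E\<rparr>)"
proof -
  from assms obtain r Y where r: "strict_mono r" "(\<lambda>k. matpow A (r k)) \<longlonglongrightarrow> Y"
    unfolding limit_points_pow_def by blast
  have "bounded (range (\<lambda>k. matpow A (r k)))" by (rule convergent_imp_bounded[OF r(2)])
  then have bounded: "bounded (range (matpow A))" by (rule matpow_bounded_if_subseq_bounded[OF r(1)])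
  have "\<exists>E. comm_group \<lparr>carrier = subseq_limits (matpow A), mult = (\<lambda>X Y. X ** Y), one = E\<rparr>"
  proof (rule comm_group_if_solvable)
    show "subseq_limits (matpow A) \<noteq> {}"
      using assms by (simp add: limit_points_pow_eq_subseq_limits)
    show "L ** M \<in> subseq_limits (matpow A)"
      if "L \<in> subseq_limits (matpow A)" "M \<in> subseq_limits (matpow A)" for L M
      using that by (rule subseq_limits_matpow_mult)
    show "L ** M ** N = L ** (M ** N)" for L M N :: "complex^'m^'m"
      by (simp add: matrix_mul_assoc)
    show "L ** M = M ** L"
      if "L \<in> subseq_limits (matpow A)" "M \<in> subseq_limits (matpow A)" for L M
      using that by (rule subseq_limits_matpow_commute)
    show "\<exists>N \<in> subseq_limits (matpow A). L ** N = M"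
      if "L \<in> subseq_limits (matpow A)" "M \<in> subseq_limits (matpow A)" for L M
      using bounded that by (rule subseq_limits_matpow_solvable)
  qed
  with compact_subseq_limits[OF bounded] show ?thesis
    by (simp add: limit_points_pow_eq_subseq_limits)
qed

end
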